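(* Let $T:\mathbb{R}^n\to\mathbb{R}^n$ be a continuous monotone operator, let $X\subset\mathbb{R}^n$ be nonempty, closed and convex, and let $X^*$ be the solution set of VI$(T,X)$. Consider the two conditions: (WS1) there exists $\rho>0$ such that for all $x^*\in X^*$ and all $x\in X$: $\langle T(x^* ),x-x^*\rangle\ge\rho\,\mathrm{dist}(x,X^* )$; (WS2) there exists $\rho>0$ such that for all $x^*\in X^*$ and all $z\in\mathbb{T}_X(x^* )\cap\mathbb{N}_{X^*}(x^* )$: $\langle T(x^* ),z\rangle\ge\rho\|z\|$. Then: (i) (WS1) implies (WS2) with the same $\rho$. (ii) If $T$ is constant on $X^*$, then (WS2) implies (WS1) with the same $\rho$.
   Context: VI$(T,X)$: find $x^*\in X$ with $\langle T(x^* ),x-x^*\rangle\ge0$ for all $x\in X$; $X^*$ denotes its solution set. $\mathrm{dist}(x,C)=\inf_{y\in C}\|x-y\|$ (Euclidean norm). For a set $C$ and $x\in C$, the normal cone is $\mathbb{N}_C(x)=\{v:\langle v,y-x\rangle\le0\ \forall y\in C\}$, and the tangent cone is $\mathbb{T}_C(x)=\{d:\exists t_k>0,\ d^k\to d \text{ with } x+t_kd^k\in C\ \forall k\}$. Monotone means $\langle T(y)-T(x),y-x\rangle\ge0$ for all $x,y$. *)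

theory Defs
  imports "HOL-Analysis.Analysis"
begin

definition VI_sol :: "('a::real_inner \<Rightarrow> 'a) \<Rightarrow> 'a set \<Rightarrow> 'a set" where
  "VI_sol T X = {xs \<in> X. \<forall>x\<in>X. inner (T xs) (x - xs) \<ge> 0}"

definition normal_cone :: "'a::real_inner set \<Rightarrow> 'a \<Rightarrow> 'a set" where
  "normal_cone C x = {v. \<forall>y\<in>C. inner v (y - x) \<le> 0}"

definition tangent_cone :: "'a::real_normed_vector set \<Rightarrow> 'a \<Rightarrow> 'a set" where
  "tangent_cone C x = {d. \<exists>t dk. (\<forall>k. t k > (0::real)) \<and> dk \<longlonglongrightarrow> d
                              \<and> (\<forall>k. x + t k *\<^sub>R dk k \<in> C)}"

definition monotone_op :: "('a::real_inner \<Rightarrow> 'a) \<Rightarrow> bool" where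
  "monotone_op T \<longleftrightarrow> (\<forall>x y. inner (T y - T x) (y - x) \<ge> 0)"

definition WS1 :: "('a::real_inner \<Rightarrow> 'a) \<Rightarrow> 'a set \<Rightarrow> real \<Rightarrow> bool" where
  "WS1 T X \<rho> \<longleftrightarrow> (\<forall>xs\<in>VI_sol T X. \<forall>x\<in>X.
      inner (T xs) (x - xs) \<ge> \<rho> * infdist x (VI_sol T X))"

definition WS2 :: "('a::real_inner \<Rightarrow> 'a) \<Rightarrow> 'a set \<Rightarrow> real \<Rightarrow> bool" where
  "WS2 T X \<rho> \<longleftrightarrow> (\<forall>xs\<in>VI_sol T X.
      \<forall>z\<in>tangent_cone X xs \<inter> normal_cone (VI_sol T X) xs.
      inner (T xs) z \<ge> \<rho> * norm z)"

end

theory Submission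
  imports Defs
begin

text \<open>
  The solution set \<open>X\<^sup>*\<close> is closed and convex by Minty's lemma, since it is an intersection of
  half-spaces. (i) A tangent direction \<open>z\<close> at \<open>x\<^sup>*\<close> is a limit of \<open>d\<^sub>k\<close> with
  \<open>x\<^sup>* + t\<^sub>k d\<^sub>k \<in> X\<close>; as \<open>z\<close> is normal to \<open>X\<^sup>*\<close> at \<open>x\<^sup>*\<close>, projecting onto \<open>z\<close> shows
  \<open>dist(x\<^sup>* + t\<^sub>k d\<^sub>k, X\<^sup>*) \<ge> t\<^sub>k \<langle>d\<^sub>k, z\<rangle>/\<parallel>z\<parallel>\<close>, so (WS1) gives
  \<open>\<langle>T x\<^sup>*, d\<^sub>k\<rangle> \<ge> \<rho> \<langle>d\<^sub>k, z\<rangle>/\<parallel>z\<parallel>\<close>, and the limit is (WS2).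
  (ii) For \<open>x \<in> X\<close> let \<open>p\<close> be its projection onto \<open>X\<^sup>*\<close>. Then \<open>x - p\<close> is both tangent to \<open>X\<close>
  and normal to \<open>X\<^sup>*\<close> at \<open>p\<close>, and \<open>\<parallel>x - p\<parallel> = dist(x, X\<^sup>*)\<close>; since \<open>T x\<^sup>* = T p\<close>,
  \<open>\<langle>T x\<^sup>*, x - x\<^sup>*\<rangle> = \<langle>T p, x - p\<rangle> + \<langle>T x\<^sup>*, p - x\<^sup>*\<rangle> \<ge> \<rho> \<parallel>x - p\<parallel>\<close>.
\<close>

lemma Minty_imp_VI:
  fixes T :: "'a::real_inner \<Rightarrow> 'a"
  assumes cont: "continuous_on X T" and "convex X" and "y \<in> X" and "x \<in> X"
    and Minty: "\<forall>x\<in>X. inner (T x) (x - y) \<ge> 0"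
  shows "inner (T y) (x - y) \<ge> 0"
proof -
  define g where "g t = y + t *\<^sub>R (x - y)" for t :: real
  have g_in_X: "g t \<in> X" if "0 \<le> t" "t \<le> 1" for t
    using assms(2-4) that convexD_alt[of X y x t] by (simp add: g_def algebra_simps)
  have segment_nonneg: "inner (T (g t)) (x - y) \<ge> 0" if "0 < t" "t \<le> 1" for t
  proof -
    have "inner (T (g t)) (g t - y) \<ge> 0"
      using Minty g_in_X[of t] that by simp
    then have "t * inner (T (g t)) (x - y) \<ge> 0"
      by (simp add: g_def)
    with \<open>0 < t\<close> show ?thesis by (simp add: zero_le_mult_iff)
  qed
  have "continuous_on {0..1} g"
    unfolding g_def by (intro continuous_intros)
  then have "continuous_on {0..1} (T \<circ> g)"
    using g_in_X by (intro continuous_on_compose continuous_on_subset[OF cont]) auto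
  moreover have "(\<lambda>n. 1 / (real n + 1)) \<longlonglongrightarrow> 0"
    using LIMSEQ_inverse_real_of_nat by (simp add: inverse_eq_divide add.commute)
  ultimately have "(\<lambda>n. (T \<circ> g) (1 / (real n + 1))) \<longlonglongrightarrow> (T \<circ> g) 0"
    by (rule continuous_on_tendsto_compose) (auto simp: field_simps)
  then have "(\<lambda>n. inner (T (g (1 / (real n + 1)))) (x - y)) \<longlonglongrightarrow> inner (T (g 0)) (x - y)"
    by (intro tendsto_intros) (simp add: o_def)
  then have "inner (T (g 0)) (x - y) \<ge> 0"
    by (rule LIMSEQ_le_const) (auto intro!: segment_nonneg simp: field_simps)
  then show ?thesis by (simp add: g_def)
qed

lemma VI_sol_Minty:
  fixes T :: "'a::real_inner \<Rightarrow> 'a"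
  assumes "continuous_on X T" and mono: "monotone_op T" and "convex X"
  shows "VI_sol T X = {y \<in> X. \<forall>x\<in>X. inner (T x) (x - y) \<ge> 0}"
proof (intro equalityI subsetI)
  fix y assume y: "y \<in> VI_sol T X"
  have "inner (T x) (x - y) \<ge> 0" if "x \<in> X" for x
  proof -
    have "inner (T x - T y) (x - y) \<ge> 0" using mono by (simp add: monotone_op_def)
    moreover have "inner (T y) (x - y) \<ge> 0" using y \<open>x \<in> X\<close> by (simp add: VI_sol_def)
    ultimately show ?thesis by (simp add: inner_diff_left)
  qed
  with y show "y \<in> {y \<in> X. \<forall>x\<in>X. inner (T x) (x - y) \<ge> 0}"
    by (simp add: VI_sol_def)
next
  fix y assume "y \<in> {y \<in> X. \<forall>x\<in>X. inner (T x) (x - y) \<ge> 0}"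
  then show "y \<in> VI_sol T X"
    using Minty_imp_VI[OF assms(1,3)] by (simp add: VI_sol_def)
qed

lemma VI_sol_eq_Int_halfspaces:
  fixes T :: "'a::real_inner \<Rightarrow> 'a"
  assumes "continuous_on X T" "monotone_op T" "convex X"
  shows "VI_sol T X = X \<inter> (\<Inter>x\<in>X. {y. inner (T x) y \<le> inner (T x) x})"
  unfolding VI_sol_Minty[OF assms] by (auto simp: inner_diff_right)

lemma closed_VI_sol:
  fixes T :: "'a::real_inner \<Rightarrow> 'a"
  assumes "continuous_on X T" "monotone_op T" "convex X" "closed X"
  shows "closed (VI_sol T X)"
  unfolding VI_sol_eq_Int_halfspaces[OF assms(1-3)]
  by (intro closed_Int assms(4) closed_INT ballI closed_halfspace_le)

lemma convex_VI_sol: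
  fixes T :: "'a::real_inner \<Rightarrow> 'a"
  assumes "continuous_on X T" "monotone_op T" "convex X"
  shows "convex (VI_sol T X)"
  unfolding VI_sol_eq_Int_halfspaces[OF assms]
  by (intro convex_Int assms(3) convex_INT ballI convex_halfspace_le)

lemma infdist_ge_inner_normal:
  fixes S :: "'a::real_inner set"
  assumes "x \<in> S" and z: "z \<in> normal_cone S x"
  shows "inner d z \<le> infdist (x + d) S * norm z"
proof -
  have bound: "inner d z \<le> dist (x + d) y * norm z" if "y \<in> S" for y
  proof -
    have "inner d z \<le> inner (x + d - y) z"
      using z \<open>y \<in> S\<close> by (auto simp: normal_cone_def inner_commute algebra_simps)
    also have "\<dots> \<le> dist (x + d) y * norm z"
      by (metis dist_norm norm_cauchy_schwarz)
    finally show ?thesis .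
  qed
  have "inner d z / norm z \<le> infdist (x + d) S" if "z \<noteq> 0"
  proof -
    have "inner d z / norm z \<le> dist (x + d) y" if "y \<in> S" for y
      using bound[OF that] \<open>z \<noteq> 0\<close> by (simp add: pos_divide_le_eq)
    with \<open>x \<in> S\<close> show ?thesis
      by (subst infdist_notempty) (auto intro!: cINF_greatest)
  qed
  then show ?thesis
    by (cases "z = 0") (auto simp: pos_divide_le_eq)
qed

lemma diff_in_tangent_cone:
  assumes "x \<in> C"
  shows "x - p \<in> tangent_cone C p"
  unfolding tangent_cone_def using assms
  by (intro CollectI exI[of _ "\<lambda>k. 1"] exI[of _ "\<lambda>k. x - p"]) auto

lemma closest_point_in_normal_cone:
  fixes S :: "'a::euclidean_space set"
  assumes "convex S" "closed S"
  shows "x - closest_point S x \<in> normal_cone S (closest_point S x)"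
  using closest_point_dot[OF assms] by (auto simp: normal_cone_def)

lemma WS1_imp_WS2:
  fixes T :: "'a::real_inner \<Rightarrow> 'a"
  assumes WS1: "WS1 T X \<rho>" and "\<rho> \<ge> 0"
  shows "WS2 T X \<rho>"
  unfolding WS2_def
proof (intro ballI)
  let ?S = "VI_sol T X"
  fix xs z assume xs: "xs \<in> ?S" and z: "z \<in> tangent_cone X xs \<inter> normal_cone ?S xs"
  from z obtain t dk where t: "\<And>k. t k > 0" and dk: "dk \<longlonglongrightarrow> z"
    and in_X: "\<And>k. xs + t k *\<^sub>R dk k \<in> X" by (auto simp: tangent_cone_def)
  have approx: "\<rho> * inner (dk k) z \<le> inner (T xs) (dk k) * norm z" for k
  proof -
    have "t k * (\<rho> * inner (dk k) z) = \<rho> * inner (t k *\<^sub>R dk k) z"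
      by simp
    also have "\<dots> \<le> \<rho> * infdist (xs + t k *\<^sub>R dk k) ?S * norm z"
      using mult_left_mono[OF infdist_ge_inner_normal[OF xs, of z "t k *\<^sub>R dk k"] \<open>\<rho> \<ge> 0\<close>] z
      by (simp add: mult.assoc)
    also have "\<dots> \<le> inner (T xs) (t k *\<^sub>R dk k) * norm z"
      using WS1 xs in_X[of k] unfolding WS1_def
      by (metis add_diff_cancel_left' mult_right_mono norm_ge_zero)
    also have "\<dots> = t k * (inner (T xs) (dk k) * norm z)"
      by simp
    finally show ?thesis using t[of k] by simp
  qed
  have "(\<lambda>k. \<rho> * inner (dk k) z) \<longlonglongrightarrow> \<rho> * inner z z"
    using dk by (intro tendsto_intros)
  moreover have "(\<lambda>k. inner (T xs) (dk k) * norm z) \<longlonglongrightarrow> inner (T xs) z * norm z"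
    using dk by (intro tendsto_mult_right tendsto_intros)
  ultimately have "\<rho> * inner z z \<le> inner (T xs) z * norm z"
    using approx by (intro LIMSEQ_le) auto
  then show "inner (T xs) z \<ge> \<rho> * norm z"
    by (cases "z = 0") (auto simp: power2_norm_eq_inner[symmetric] power2_eq_square)
qed

lemma WS2_imp_WS1:
  fixes T :: "'a::euclidean_space \<Rightarrow> 'a"
  assumes "continuous_on X T" "monotone_op T" "convex X" "closed X"
    and const: "\<forall>x\<in>VI_sol T X. \<forall>y\<in>VI_sol T X. T x = T y"
    and WS2: "WS2 T X \<rho>" and "\<rho> \<ge> 0"
  shows "WS1 T X \<rho>"
  unfolding WS1_def
proof (intro ballI)
  let ?S = "VI_sol T X"
  fix xs x assume xs: "xs \<in> ?S" and x: "x \<in> X"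
  have closed: "closed ?S" and convex: "convex ?S"
    using closed_VI_sol[OF assms(1-4)] convex_VI_sol[OF assms(1-3)] .
  define p where "p = closest_point ?S x"
  have p: "p \<in> ?S"
    unfolding p_def using closest_point_in_set[OF closed] xs by blast
  then have "p \<in> X" by (simp add: VI_sol_def)
  have "\<rho> * infdist x ?S \<le> \<rho> * norm (x - p)"
    using infdist_le[OF p, of x] \<open>\<rho> \<ge> 0\<close> by (simp add: dist_norm mult_left_mono)
  also have "\<dots> \<le> inner (T p) (x - p)"
    using WS2 p diff_in_tangent_cone[OF x, of p] closest_point_in_normal_cone[OF convex closed]
    by (simp add: WS2_def p_def)
  also have "\<dots> \<le> inner (T xs) (x - p) + inner (T xs) (p - xs)"
  proof -
    have "T p = T xs" using const p xs by blast
    moreover have "inner (T xs) (p - xs) \<ge> 0" using xs \<open>p \<in> X\<close> by (simp add: VI_sol_def)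
    ultimately show ?thesis by simp
  qed
  also have "\<dots> = inner (T xs) (x - xs)"
    by (simp add: inner_diff_right)
  finally show "inner (T xs) (x - xs) \<ge> \<rho> * infdist x ?S" .
qed

theorem proposition2p1:
  fixes T :: "real ^ 'n \<Rightarrow> real ^ 'n" and X :: "(real ^ 'n) set" and \<rho> :: real
  assumes "continuous_on UNIV T" and "monotone_op T"
    and "X \<noteq> {}" and "closed X" and "convex X"
    and "\<rho> > 0"
  shows "(WS1 T X \<rho> \<longrightarrow> WS2 T X \<rho>)
    \<and> ((\<forall>x\<in>VI_sol T X. \<forall>y\<in>VI_sol T X. T x = T y) \<longrightarrow> WS2 T X \<rho> \<longrightarrow> WS1 T X \<rho>)"
proof -
  have "continuous_on X T" using assms(1) by (rule continuous_on_subset) simp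
  moreover have "\<rho> \<ge> 0" using \<open>\<rho> > 0\<close> by simp
  ultimately show ?thesis
    using WS1_imp_WS2 WS2_imp_WS1 \<open>monotone_op T\<close> \<open>convex X\<close> \<open>closed X\<close> by blast
qed

end
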